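(* Let $M$ satisfy the strong spectral gap assumption and let $\alpha$ be a good time-change function on $M$ with constant $C_\alpha$. There exists $\eta\in(0,1/4)$ such that for every $\omega>0$ there exist a set $Y\subset M$ with $\mu(Y)\ge1-\omega$ and a constant $m\ge1$ such that for all $x\in Y$ and all $t\ge m$, \[|\xi(x,t)-t|\le C_\alpha^{-4}t^{1-\eta},\qquad |w(x,t)-t|\le C_\alpha^{-4}t^{1-\eta}.\]
   Context: $G$ connected semisimple linear Lie group, $\Gamma$ lattice, $M=\Gamma\backslash G$ with Haar probability $\mu$; $\mathbf u^t=\exp(tU)$ a unipotent one-parameter subgroup. Strong spectral gap: the regular representation of $G$ on $L^2(M)$ restricted to each noncompact simple factor is isolated from the trivial one (Fell topology); this gives a Sobolev norm $\mathcal S$ (with $\sup|f|\le\mathcal S(f)$) and $C,\tilde\eta>0$ with $|\langle f\circ\phi^t,g\rangle|\le C\mathcal S(f)\mathcal S(g)t^{-\tilde\eta}$, $t\ge1$, for zero-average $f,g$, where $\phi^t(x)=x\mathbf u^t$. A good time-change function is a measurable $\alpha\colon M\to\mathbb R_{>0}$ with $C_\alpha:=\sup_M\max\{\alpha,\alpha^{-1}\}<\infty$ (and we take $C_\alpha>1$), $\int\alpha\,d\mu=1$, $\mathcal S(\alpha)<\infty$. Set $\xi(x,t)=\int_0^t\alpha(x\mathbf u^r)\,dr$ and let $w(x,\cdot)$ be the inverse function of $\xi(x,\cdot)$. *)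

theory Defs
  imports "HOL-Probability.Probability"
begin

text \<open>Abstract rendering of the setting: the homogeneous space
  M = Gamma\G with Haar probability mu is modelled by a probability space
  (a measure M), the unipotent flow x \<mapsto> x u^t by a measurable,
  measure preserving real flow phi, and the strong spectral gap assumption by
  its quantitative consequence (polynomial decay of correlations w.r.t. a
  Sobolev norm S).\<close>

definition xi :: "(real \<Rightarrow> 'a \<Rightarrow> 'a) \<Rightarrow> ('a \<Rightarrow> real) \<Rightarrow> 'a \<Rightarrow> real \<Rightarrow> real" where
  "xi phi alpha x t = (LBINT r=0..t. alpha (phi r x))"

definition w_inv :: "(real \<Rightarrow> 'a \<Rightarrow> 'a) \<Rightarrow> ('a \<Rightarrow> real) \<Rightarrow> 'a \<Rightarrow> real \<Rightarrow> real" where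
  "w_inv phi alpha x s = (THE t. xi phi alpha x t = s)"

definition C_alpha :: "'a measure \<Rightarrow> ('a \<Rightarrow> real) \<Rightarrow> real" where
  "C_alpha M alpha = (SUP x\<in>space M. max (alpha x) (1 / alpha x))"

end

theory Submission
  imports Defs
begin

text \<open>Since \<xi>(x, s + t) = \<xi>(x, s) + \<xi>(x u^s, t), the deviation \<xi>(x, N) - N at an integer
  time N is the Birkhoff sum of the bounded function g(y) = \<xi>(y, 1) - 1 along x u^0, ..., x u^(N-1).
  Integrating the decay of correlations of \<alpha> - 1 over unit intervals gives the same decay for
  the correlations of g; bounding the correlations at lag at most L trivially and the others by
  their decay yields E[(\<xi>(\<cdot>, N) - N)^2] \<le> N ((2L + 1) K^2 + N B L^(-\<eta>)). Chebyshev's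
  inequality along the sparse times N = n^p, with L = n^(p/2), bounds the probability of a
  deviation \<ge> N^(1-\<theta>) by O(n^(-2)), which is summable; so off a set of small measure all these
  deviations are small from some n0 on. Between n^p and (n + 1)^p the map \<xi>(x, \<cdot>) is
  K-Lipschitz and the gap is O(n^(p-1)), which interpolates the bound to all times. The bound
  for w follows because w(x, \<cdot>) inverts a bi-Lipschitz map.\<close>

lemma set_integrable_const_Ioc: "set_integrable lborel {(a::real)<..b} (\<lambda>_. c::real)"
  unfolding set_integrable_def
proof (rule integrableI_bounded_set_indicator[where B="\<bar>c\<bar>"])
  show "emeasure lborel {a<..b} < \<infinity>" by (cases "a \<le> b") auto
qed auto

lemma set_integral_const_Ioc: "(a::real) \<le> b \<Longrightarrow> (LBINT r:{a<..b}. (c::real)) = c * (b - a)"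
  by (subst set_integral_const) auto

lemma set_integral_Ioc_mult_right:
  "(LBINT r:{a<..b::real}. F r) * c = (LBINT r:{a<..b}. F r * (c::real))"
proof -
  have "(\<lambda>x. indicator {a<..b} x *\<^sub>R (F x * c)) = (\<lambda>x. (indicator {a<..b} x *\<^sub>R F x) * c)"
    by (simp add: mult.assoc)
  then show ?thesis unfolding set_lebesgue_integral_def by simp
qed

lemma abs_set_integral_unit_interval_le:
  fixes F :: "real \<Rightarrow> real"
  assumes "\<And>r. r \<in> {0<..1} \<Longrightarrow> \<bar>F r\<bar> \<le> b"
  shows "\<bar>LBINT r:{0<..1}. F r\<bar> \<le> b"
proof -
  have "\<bar>F 1\<bar> \<le> b" by (rule assms) simp
  then have b0: "0 \<le> b" by linarith
  have "\<bar>LBINT r:{0<..1}. F r\<bar> \<le> (\<integral>r. norm (indicator {0<..1::real} r *\<^sub>R F r) \<partial>lborel)"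
    unfolding set_lebesgue_integral_def using integral_norm_bound[of lborel] by (metis real_norm_def)
  also have "\<dots> \<le> (\<integral>r. indicator {0<..1::real} r *\<^sub>R b \<partial>lborel)"
  proof (rule integral_mono')
    show "integrable lborel (\<lambda>r. indicator {0<..1::real} r *\<^sub>R b)"
      using set_integrable_const_Ioc[of 0 1 b] unfolding set_integrable_def .
  qed (use assms b0 in \<open>auto simp: indicator_def\<close>)
  also have "\<dots> = b"
    using set_integral_const_Ioc[of 0 1 b] unfolding set_lebesgue_integral_def by simp
  finally show ?thesis .
qed

lemma (in prob_space) abs_integral_le_const:
  assumes "\<And>x. x \<in> space M \<Longrightarrow> \<bar>h x\<bar> \<le> b"
  shows "\<bar>\<integral>x. h x \<partial>M\<bar> \<le> (b::real)"
proof -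
  obtain x0 where "x0 \<in> space M" using not_empty by blast
  then have b0: "0 \<le> b" using assms[of x0] by linarith
  have "\<bar>\<integral>x. h x \<partial>M\<bar> \<le> (\<integral>x. norm (h x) \<partial>M)" using integral_norm_bound[of M h] by simp
  also have "\<dots> \<le> (\<integral>x. b \<partial>M)"
    by (rule integral_mono') (use assms b0 in auto)
  also have "\<dots> = b" by (simp add: prob_space)
  finally show ?thesis .
qed

lemma (in prob_space) integral_set_integral_unit_interval_swap:
  fixes G :: "'a \<Rightarrow> real \<Rightarrow> real"
  assumes G_measurable: "(\<lambda>(x, r). G x r) \<in> borel_measurable (M \<Otimes>\<^sub>M lborel)"
    and G_bounded: "\<And>x r. x \<in> space M \<Longrightarrow> \<bar>G x r\<bar> \<le> c"
  shows "(\<integral>x. (LBINT r:{0<..1}. G x r) \<partial>M) = (LBINT r:{0<..1}. (\<integral>x. G x r \<partial>M))"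
proof -
  interpret pair_sigma_finite M lborel ..
  let ?H = "\<lambda>x r. indicator {0<..1::real} r *\<^sub>R G x r"
  have H_measurable: "(\<lambda>(x, r). ?H x r) \<in> borel_measurable (M \<Otimes>\<^sub>M lborel)"
  proof -
    have "(\<lambda>p. indicator {0<..1::real} (snd p) *\<^sub>R (\<lambda>(x, r). G x r) p)
        \<in> borel_measurable (M \<Otimes>\<^sub>M lborel)"
      using G_measurable by measurable
    then show ?thesis by (simp add: case_prod_beta')
  qed
  have "integrable (M \<Otimes>\<^sub>M lborel) (\<lambda>(x, r). ?H x r)"
  proof (rule integrableI_bounded_set[where A="space M \<times> {0<..1}" and B=c])
    show "space M \<times> {0<..1::real} \<in> sets (M \<Otimes>\<^sub>M lborel)" by auto
    show "emeasure (M \<Otimes>\<^sub>M lborel) (space M \<times> {0<..1::real}) < \<infinity>"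
      by (subst lborel.emeasure_pair_measure_Times) (auto simp: emeasure_space_1)
    show "AE p in M \<Otimes>\<^sub>M lborel. p \<in> space M \<times> {0<..1} \<longrightarrow> norm ((\<lambda>(x, r). ?H x r) p) \<le> c"
      by (rule AE_I2) (auto simp: G_bounded)
    show "AE p in M \<Otimes>\<^sub>M lborel. p \<notin> space M \<times> {0<..1} \<longrightarrow> (\<lambda>(x, r). ?H x r) p = 0"
      by (rule AE_I2) (auto simp: space_pair_measure indicator_def)
  qed (rule H_measurable)
  then have "(\<integral>r. (\<integral>x. ?H x r \<partial>M) \<partial>lborel) = (\<integral>x. (\<integral>r. ?H x r \<partial>lborel) \<partial>M)"
    by (intro Fubini_integral) simp
  then show ?thesis unfolding set_lebesgue_integral_def by simp
qed

lemma (in prob_space) prob_abs_ge_le_second_moment: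
  assumes "integrable M (\<lambda>x. (h x)\<^sup>2)" and "0 < \<tau>"
  shows "measure M {x \<in> space M. \<tau> \<le> \<bar>h x\<bar>} \<le> (\<integral>x. (h x)\<^sup>2 \<partial>M) / \<tau>\<^sup>2"
proof -
  have "{x \<in> space M. \<tau> \<le> \<bar>h x\<bar>} = {x \<in> space M. \<tau>\<^sup>2 \<le> (h x)\<^sup>2}"
    using assms(2) by (auto simp: abs_le_square_iff[symmetric])
  also have "measure M \<dots> \<le> (\<integral>x. (h x)\<^sup>2 \<partial>M) / \<tau>\<^sup>2"
    by (rule integral_Markov_inequality_measure[OF assms(1)]) (use assms(2) in auto)
  finally show ?thesis .
qed

lemma (in prob_space) measure_UN_tail_le:
  fixes E :: "nat \<Rightarrow> 'a set" and A :: real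
  assumes sets: "\<And>n. E n \<in> events"
    and bound: "\<And>n. 1 \<le> n \<Longrightarrow> prob (E n) \<le> A / real n ^ 2"
    and A: "0 \<le> A" and n0: "1 \<le> n0"
  shows "prob (\<Union>i. E (i + n0)) \<le> 2 * A / real n0"
proof -
  define h where "h i = 2 * A / real (i + n0)" for i
  have "h \<longlonglongrightarrow> 0"
    unfolding h_def using LIMSEQ_ignore_initial_segment[OF lim_const_over_n[of "2 * A"], of n0]
    by simp
  then have telescope: "(\<lambda>i. h i - h (Suc i)) sums h 0"
    using telescope_sums'[of h 0] by simp
  \<comment> \<open>\<open>1/n\<^sup>2 \<le> 2/(n(n + 1)) = 2/n - 2/(n + 1)\<close>\<close>
  have le: "prob (E (i + n0)) \<le> h i - h (Suc i)" for i
  proof -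
    let ?n = "real (i + n0)"
    have n1: "1 \<le> ?n" using n0 by simp
    have "prob (E (i + n0)) \<le> A / ?n ^ 2" using bound[of "i + n0"] n0 by simp
    also have "\<dots> = 2 * A / (2 * ?n ^ 2)" by simp
    also have "\<dots> \<le> 2 * A / (?n * (?n + 1))"
    proof (rule divide_left_mono)
      have "1 * ?n \<le> ?n * ?n" using n1 by (intro mult_right_mono) auto
      then show "?n * (?n + 1) \<le> 2 * ?n ^ 2" by (simp add: power2_eq_square algebra_simps)
    qed (use n1 A in auto)
    also have "\<dots> = h i - h (Suc i)"
      using n1 by (simp add: h_def field_simps)
    finally show ?thesis .
  qed
  have summable: "summable (\<lambda>i. prob (E (i + n0)))"
    by (rule summable_comparison_test[OF _ sums_summable[OF telescope]]) (use le in auto)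
  have "prob (\<Union>i. E (i + n0)) \<le> (\<Sum>i. prob (E (i + n0)))"
    by (rule finite_measure_subadditive_countably) (use sets summable in auto)
  also have "\<dots> \<le> (\<Sum>i. h i - h (Suc i))"
    by (rule suminf_le) (use le summable sums_summable[OF telescope] in auto)
  also have "\<dots> = h 0" using telescope by (simp add: sums_iff)
  finally show ?thesis by (simp add: h_def)
qed

lemma (in prob_space) large_event_avoiding_tail:
  fixes E :: "nat \<Rightarrow> 'a set" and A :: real
  assumes sets: "\<And>n. E n \<in> events"
    and bound: "\<And>n. 1 \<le> n \<Longrightarrow> prob (E n) \<le> A / real n ^ 2"
    and A: "0 \<le> A" and omega: "0 < \<omega>"
  obtains Y n0 where "Y \<in> events" "1 - \<omega> \<le> prob Y" "1 \<le> n0"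
    "\<And>x n. x \<in> Y \<Longrightarrow> n0 \<le> n \<Longrightarrow> x \<in> space M \<and> x \<notin> E n"
proof
  define n0 :: nat where "n0 = nat \<lceil>2 * A / \<omega>\<rceil> + 1"
  show n0_ge_1: "1 \<le> n0" by (simp add: n0_def)
  define U where "U = (\<Union>i. E (i + n0))"
  have U_event: "U \<in> events" unfolding U_def using sets by auto
  have "2 * A / \<omega> \<le> real n0" unfolding n0_def by linarith
  then have "2 * A / real n0 \<le> \<omega>"
    using omega n0_ge_1 by (simp add: field_simps)
  then have "prob U \<le> \<omega>"
    unfolding U_def using measure_UN_tail_le[OF sets bound A n0_ge_1] by linarith
  then show "1 - \<omega> \<le> prob (space M - U)" using prob_compl[OF U_event] by linarith
  show "space M - U \<in> events" using U_event by auto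
  fix x n assume "x \<in> space M - U" "n0 \<le> n"
  moreover have "n = (n - n0) + n0" using \<open>n0 \<le> n\<close> by simp
  ultimately show "x \<in> space M \<and> x \<notin> E n" unfolding U_def by (metis DiffE UNIV_I UN_I)
qed

lemma Suc_power_diff_le: "(n + 1) ^ p - n ^ p \<le> p * (n + 1::nat) ^ (p - 1)"
proof (induction p)
  case 0 then show ?case by simp
next
  case (Suc p)
  have "(n + 1) ^ Suc p - n ^ Suc p = (n + 1) * ((n + 1) ^ p - n ^ p) + n ^ p"
  proof -
    have "n ^ p \<le> (n + 1) ^ p" by (simp add: power_mono)
    then obtain d where d: "(n + 1) ^ p = n ^ p + d" using le_iff_add by blast
    then show ?thesis by (simp add: algebra_simps)
  qed
  also have "\<dots> \<le> (n + 1) * (p * (n + 1) ^ (p - 1)) + (n + 1) ^ p"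
    using Suc by (intro add_mono mult_le_mono2 power_mono) auto
  also have "\<dots> = Suc p * (n + 1) ^ (Suc p - 1)"
    by (cases p) (simp_all add: algebra_simps)
  finally show ?case .
qed

lemma real_Suc_power_diff_le:
  assumes "1 \<le> n"
  shows "real ((n + 1) ^ p) - real (n ^ p) \<le> real p * 2 ^ (p - 1) * real n ^ (p - 1)"
proof -
  have le: "n ^ p \<le> (n + 1) ^ p" by (simp add: power_mono)
  have "real ((n + 1) ^ p) - real (n ^ p) = real ((n + 1) ^ p - n ^ p)"
    using le by (simp add: of_nat_diff)
  also have "\<dots> \<le> real (p * (n + 1) ^ (p - 1))"
    using Suc_power_diff_le by (simp only: of_nat_le_iff)
  also have "\<dots> \<le> real (p * (2 * n) ^ (p - 1))"
    using assms by (simp only: of_nat_le_iff) (intro mult_le_mono2 power_mono, auto)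
  also have "\<dots> = real p * 2 ^ (p - 1) * real n ^ (p - 1)" by (simp add: power_mult_distrib)
  finally show ?thesis .
qed

lemma real_power_bracket:
  assumes "0 < p" and "real N ^ p \<le> t"
  obtains n :: nat where "N \<le> n" "real (n ^ p) \<le> t" "t \<le> real ((n + 1) ^ p)"
proof
  have t0: "0 \<le> t" using assms(2) by (metis of_nat_0_le_iff order_trans zero_le_power)
  define n where "n = nat \<lfloor>root p t\<rfloor>"
  have root_nonneg: "0 \<le> root p t" using t0 by (rule real_root_ge_zero)
  have "root p (real N ^ p) \<le> root p t" using assms by (simp add: real_root_le_iff)
  then have "real N \<le> root p t" using assms(1) by (simp add: real_root_power_cancel)
  then show "N \<le> n" unfolding n_def by (simp add: le_nat_floor)
  have "real n \<le> root p t" unfolding n_def using root_nonneg by linarith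
  then have "real n ^ p \<le> root p t ^ p" by (rule power_mono) simp
  also have "\<dots> = t" using assms(1) t0 by (simp add: real_root_pow_pos2)
  finally show "real (n ^ p) \<le> t" by simp
  have "t = root p t ^ p" using assms(1) t0 by (simp add: real_root_pow_pos2)
  also have "\<dots> \<le> (real n + 1) ^ p"
    by (rule power_mono) (use root_nonneg in \<open>auto simp: n_def\<close>)
  finally show "t \<le> real ((n + 1) ^ p)" by (simp add: add.commute)
qed

lemma eventually_powr_neg_le:
  assumes "0 < a" and "0 < e"
  shows "eventually (\<lambda>n. real n powr (- a) \<le> e) sequentially"
proof -
  have "((\<lambda>n. real n powr (- a)) \<longlongrightarrow> 0) sequentially"
    using assms(1) by (intro tendsto_neg_powr filterlim_real_sequentially) simp
  from order_tendstoD(2)[OF this assms(2)] show ?thesis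
    by (rule eventually_mono) simp
qed

definition index_dist :: "nat \<Rightarrow> nat \<Rightarrow> nat" where
  "index_dist i j = (if j \<le> i then i - j else j - i)"

lemma card_index_dist_le: "card {j \<in> {..<N}. index_dist i j \<le> L} \<le> 2 * L + 1"
proof -
  have "{j \<in> {..<N}. index_dist i j \<le> L} \<subseteq> {i - L..i + L}" by (auto simp: index_dist_def)
  then have "card {j \<in> {..<N}. index_dist i j \<le> L} \<le> card {i - L..i + L}" by (intro card_mono) auto
  also have "\<dots> \<le> 2 * L + 1" by simp
  finally show ?thesis .
qed

section \<open>Time changes of measure preserving flows\<close>

locale time_changed_flow = prob_space M
  for M :: "'a measure" and phi :: "real \<Rightarrow> 'a \<Rightarrow> 'a" and alpha :: "'a \<Rightarrow> real" and K :: real +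
  assumes flow_measurable: "(\<lambda>(x, t). phi t x) \<in> measurable (M \<Otimes>\<^sub>M lborel) M"
    and flow_preserving: "\<And>t. phi t \<in> M \<rightarrow>\<^sub>M M \<and> distr M M (phi t) = M"
    and flow_add: "\<And>s t x. x \<in> space M \<Longrightarrow> phi (s + t) x = phi t (phi s x)"
    and alpha_measurable: "alpha \<in> borel_measurable M"
    and K_gt_1: "1 < K"
    and alpha_le: "\<And>x. x \<in> space M \<Longrightarrow> alpha x \<le> K"
    and alpha_ge: "\<And>x. x \<in> space M \<Longrightarrow> 1 / K \<le> alpha x"
begin

abbreviation \<xi> :: "'a \<Rightarrow> real \<Rightarrow> real" where "\<xi> \<equiv> xi phi alpha"

lemma phi_measurable: "phi t \<in> M \<rightarrow>\<^sub>M M"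
  using flow_preserving[of t] by (rule conjunct1)

lemma phi_in_space: "x \<in> space M \<Longrightarrow> phi t x \<in> space M"
  by (rule measurable_space[OF phi_measurable])

lemma integral_flow_invariant:
  fixes F :: "'a \<Rightarrow> real"
  assumes "F \<in> borel_measurable M"
  shows "(\<integral>x. F (phi s x) \<partial>M) = (\<integral>x. F x \<partial>M)"
proof -
  have "(\<integral>x. F x \<partial>M) = integral\<^sup>L (distr M M (phi s)) F"
    using flow_preserving[of s] by simp
  also have "\<dots> = (\<integral>x. F (phi s x) \<partial>M)" by (rule integral_distr[OF phi_measurable assms])
  finally show ?thesis by simp
qed

lemma alpha_flow_measurable: "(\<lambda>(x, r). alpha (phi r x)) \<in> borel_measurable (M \<Otimes>\<^sub>M lborel)"
proof -
  have "(\<lambda>p. alpha ((\<lambda>(x, t). phi t x) p)) \<in> borel_measurable (M \<Otimes>\<^sub>M lborel)"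
    by (rule measurable_compose[OF flow_measurable alpha_measurable])
  then show ?thesis by (simp add: case_prod_beta')
qed

lemma alpha_orbit_measurable:
  assumes "x \<in> space M"
  shows "(\<lambda>r. alpha (phi r x)) \<in> borel_measurable lborel"
proof -
  have "(\<lambda>r. (x, r)) \<in> measurable lborel (M \<Otimes>\<^sub>M lborel)"
    using assms by (rule measurable_Pair1')
  from measurable_compose[OF this alpha_flow_measurable] show ?thesis by simp
qed

lemma alpha_orbit_bounds: "x \<in> space M \<Longrightarrow> 1 / K \<le> alpha (phi r x) \<and> alpha (phi r x) \<le> K"
  using phi_in_space alpha_le alpha_ge by blast

lemma alpha_orbit_set_integrable:
  assumes "x \<in> space M"
  shows "set_integrable lborel {a<..b} (\<lambda>r. alpha (phi r x))"
  unfolding set_integrable_def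
proof (rule integrableI_bounded_set_indicator[where B=K])
  show "emeasure lborel {a<..b} < \<infinity>" by (cases "a \<le> b") auto
  have "0 < 1 / K" using K_gt_1 by simp
  then show "AE r in lborel. r \<in> {a<..b} \<longrightarrow> norm (alpha (phi r x)) \<le> K"
    using alpha_orbit_bounds[OF assms] by (intro AE_I2) (smt (verit) real_norm_def)
qed (use assms alpha_orbit_measurable in auto)

definition orbit_integral :: "'a \<Rightarrow> real \<Rightarrow> real \<Rightarrow> real" where
  "orbit_integral x a b = (LBINT r:{a<..b}. alpha (phi r x))"

lemma xi_eq_orbit_integral: "0 \<le> t \<Longrightarrow> \<xi> x t = orbit_integral x 0 t"
  unfolding xi_def orbit_integral_def using interval_integral_Ioc[of 0 t]
  by (simp add: zero_ereal_def)

lemma orbit_integral_split: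
  assumes "x \<in> space M" "a \<le> b" "b \<le> c"
  shows "orbit_integral x a c = orbit_integral x a b + orbit_integral x b c"
proof -
  have "{a<..c} = {a<..b} \<union> {b<..c}" using assms by auto
  moreover have "(LBINT r:{a<..b} \<union> {b<..c}. alpha (phi r x))
      = (LBINT r:{a<..b}. alpha (phi r x)) + (LBINT r:{b<..c}. alpha (phi r x))"
    by (rule set_integral_Un) (auto intro: alpha_orbit_set_integrable assms(1))
  ultimately show ?thesis unfolding orbit_integral_def by simp
qed

lemma orbit_integral_shift:
  assumes "x \<in> space M"
  shows "orbit_integral x a b = orbit_integral (phi a x) 0 (b - a)"
proof -
  have "orbit_integral x a b = (\<integral>r. indicator {a<..b} r *\<^sub>R alpha (phi r x) \<partial>lborel)"
    unfolding orbit_integral_def set_lebesgue_integral_def ..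
  also have "\<dots> = (\<integral>r. indicator {a<..b} r *\<^sub>R alpha (phi r x) \<partial>(distr lborel borel ((+) a)))"
    by (simp add: lborel_distr_plus)
  also have "\<dots> = (\<integral>r. indicator {a<..b} (a + r) *\<^sub>R alpha (phi (a + r) x) \<partial>lborel)"
    by (rule integral_distr) (use alpha_orbit_measurable[OF assms] in auto)
  also have "\<dots> = (\<integral>r. indicator {0<..b-a} r *\<^sub>R alpha (phi r (phi a x)) \<partial>lborel)"
  proof (rule Bochner_Integration.integral_cong)
    fix r
    have "indicator {a<..b} (a + r) = (indicator {0<..b-a} r :: real)"
      by (simp add: indicator_def algebra_simps)
    then show "indicator {a<..b} (a + r) *\<^sub>R alpha (phi (a + r) x)
        = indicator {0<..b-a} r *\<^sub>R alpha (phi r (phi a x))"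
      by (simp only: flow_add[OF assms])
  qed simp
  finally show ?thesis unfolding orbit_integral_def set_lebesgue_integral_def .
qed

lemma orbit_integral_bounds:
  assumes "x \<in> space M" "a \<le> b"
  shows "(b - a) / K \<le> orbit_integral x a b \<and> orbit_integral x a b \<le> K * (b - a)"
proof
  have "(LBINT r:{a<..b}. (1/K)) \<le> orbit_integral x a b" unfolding orbit_integral_def
    by (rule set_integral_mono)
      (use alpha_orbit_set_integrable[OF assms(1)] set_integrable_const_Ioc
        alpha_orbit_bounds[OF assms(1)] in auto)
  then show "(b - a) / K \<le> orbit_integral x a b" using assms by (simp add: set_integral_const_Ioc)
  have "orbit_integral x a b \<le> (LBINT r:{a<..b}. K)" unfolding orbit_integral_def
    by (rule set_integral_mono)
      (use alpha_orbit_set_integrable[OF assms(1)] set_integrable_const_Ioc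
        alpha_orbit_bounds[OF assms(1)] in auto)
  then show "orbit_integral x a b \<le> K * (b - a)" using assms by (simp add: set_integral_const_Ioc)
qed

lemma xi_cocycle:
  assumes "x \<in> space M" "0 \<le> s" "0 \<le> t"
  shows "\<xi> x (s + t) = \<xi> x s + \<xi> (phi s x) t"
proof -
  have "\<xi> x (s + t) = orbit_integral x 0 (s + t)" using assms by (simp add: xi_eq_orbit_integral)
  also have "\<dots> = orbit_integral x 0 s + orbit_integral x s (s + t)"
    using assms by (intro orbit_integral_split) auto
  also have "orbit_integral x s (s + t) = orbit_integral (phi s x) 0 t"
    using orbit_integral_shift[OF assms(1)] by simp
  finally show ?thesis using assms by (simp add: xi_eq_orbit_integral)
qed

lemma xi_bounds:
  assumes "x \<in> space M" "0 \<le> t"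
  shows "t / K \<le> \<xi> x t \<and> \<xi> x t \<le> K * t"
  using orbit_integral_bounds[OF assms] assms by (simp add: xi_eq_orbit_integral)

lemma xi_zero: "x \<in> space M \<Longrightarrow> \<xi> x 0 = 0"
  using xi_bounds[of x 0] by simp

lemma xi_diff_bounds:
  assumes "x \<in> space M" "0 \<le> s" "s \<le> t"
  shows "(t - s) / K \<le> \<xi> x t - \<xi> x s \<and> \<xi> x t - \<xi> x s \<le> K * (t - s)"
proof -
  have "\<xi> x t = \<xi> x (s + (t - s))" by simp
  also have "\<dots> = \<xi> x s + \<xi> (phi s x) (t - s)" using assms by (intro xi_cocycle) auto
  finally show ?thesis using xi_bounds[OF phi_in_space[OF assms(1)], of "t - s" s] assms by simp
qed

lemma xi_nonpos:
  assumes "x \<in> space M" "t \<le> 0"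
  shows "\<xi> x t \<le> 0"
proof -
  have "\<xi> x t = - (LBINT r=t..0. alpha (phi r x))"
    unfolding xi_def by (rule interval_integral_endpoints_reverse)
  also have "(LBINT r=t..0. alpha (phi r x)) = orbit_integral x t 0"
    unfolding orbit_integral_def using interval_integral_Ioc[of t 0] assms
    by (simp add: zero_ereal_def)
  moreover have "0 \<le> (0 - t) / K" using assms K_gt_1 by (simp add: divide_nonpos_pos)
  ultimately show ?thesis using orbit_integral_bounds[OF assms] by linarith
qed

lemma xi_lipschitz: "x \<in> space M \<Longrightarrow> K-lipschitz_on {0..} (\<xi> x)"
proof (rule lipschitz_onI)
  fix s t :: real assume "x \<in> space M" "s \<in> {0..}" "t \<in> {0..}"
  have "0 \<le> (\<bar>t - s\<bar>) / K" using K_gt_1 by simp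
  then show "dist (\<xi> x s) (\<xi> x t) \<le> K * dist s t"
    using xi_diff_bounds[of x s t] xi_diff_bounds[of x t s] \<open>x \<in> space M\<close> \<open>s \<in> {0..}\<close> \<open>t \<in> {0..}\<close>
    by (cases "s \<le> t") (auto simp: dist_real_def)
qed (use K_gt_1 in simp)

lemma w_inv_eq:
  assumes x: "x \<in> space M" and t: "0 < t"
  shows "0 \<le> w_inv phi alpha x t \<and> \<xi> x (w_inv phi alpha x t) = t"
proof -
  have "continuous_on {0..K * t} (\<xi> x)"
    by (rule continuous_on_subset[OF lipschitz_on_continuous_on[OF xi_lipschitz[OF x]]]) auto
  moreover have "\<xi> x 0 \<le> t" "t \<le> \<xi> x (K * t)" "0 \<le> K * t"
    using xi_zero[OF x] xi_bounds[OF x, of "K * t"] t K_gt_1 by auto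
  ultimately obtain s where s: "0 \<le> s" "\<xi> x s = t"
    using IVT'[of "\<xi> x" 0 t "K * t"] by blast
  \<comment> \<open>\<open>\<xi>(x, \<cdot>)\<close> is nonpositive on \<open>(-\<infinity>, 0]\<close> and strictly increasing on \<open>[0, \<infinity>)\<close>\<close>
  have "s' = s" if s': "\<xi> x s' = t" for s'
  proof -
    have "0 < s'" using xi_nonpos[OF x, of s'] s' t by (cases "0 < s'") auto
    have "0 < \<bar>s' - s\<bar> / K" if "s' \<noteq> s" using that K_gt_1 by simp
    then show ?thesis
      using xi_diff_bounds[OF x, of s' s] xi_diff_bounds[OF x, of s s'] \<open>0 < s'\<close> s s'
      by (cases "s' \<le> s") (auto simp: abs_if split: if_splits)
  qed
  then have "w_inv phi alpha x t = s" unfolding w_inv_def using s(2) by (intro the_equality)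
  then show ?thesis using s by simp
qed

lemma w_inv_deviation_le:
  assumes x: "x \<in> space M"
    and deviation: "\<And>s. m \<le> s \<Longrightarrow> \<bar>\<xi> x s - s\<bar> \<le> c * s powr (1 - e)"
    and c: "0 \<le> c" and e: "0 \<le> e" "e \<le> 1" and m: "0 < m" and t: "K * m \<le> t"
  shows "\<bar>w_inv phi alpha x t - t\<bar> \<le> c * K * t powr (1 - e)"
proof -
  define s where "s = w_inv phi alpha x t"
  have t0: "0 < t" using t m K_gt_1 by (smt (verit) mult_pos_pos)
  have s: "0 \<le> s" "\<xi> x s = t" using w_inv_eq[OF x t0] by (auto simp: s_def)
  have s_t: "s / K \<le> t" "t \<le> K * s" using xi_bounds[OF x s(1)] s(2) by auto
  have "K * m \<le> K * s" using t s_t(2) by linarith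
  then have "m \<le> s" using K_gt_1 by simp
  have "\<bar>w_inv phi alpha x t - t\<bar> = \<bar>\<xi> x s - s\<bar>" using s by (simp add: s_def abs_minus_commute)
  also have "\<dots> \<le> c * s powr (1 - e)" by (rule deviation[OF \<open>m \<le> s\<close>])
  also have "\<dots> \<le> c * (K * t) powr (1 - e)"
    using s(1) s_t(1) K_gt_1 e c by (intro mult_left_mono powr_mono2) (auto simp: field_simps)
  also have "\<dots> = c * K powr (1 - e) * t powr (1 - e)"
    using K_gt_1 t0 by (simp add: powr_mult)
  also have "\<dots> \<le> c * K * t powr (1 - e)"
  proof -
    have "K powr (1 - e) \<le> K powr 1" using K_gt_1 e by (intro powr_mono) auto
    then show ?thesis using K_gt_1 c by (intro mult_right_mono mult_left_mono) auto
  qed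
  finally show ?thesis .
qed

end

section \<open>Second moment of the deviation at integer times\<close>

locale decaying_time_change = time_changed_flow +
  fixes B \<eta> :: real
  assumes B_nonneg: "0 \<le> B" and eta_pos: "0 < \<eta>"
    and correlation_decay: "\<And>u. 1 \<le> u \<Longrightarrow>
      \<bar>\<integral>x. (alpha (phi u x) - 1) * (alpha x - 1) \<partial>M\<bar> \<le> B * u powr (- \<eta>)"
begin

definition alpha_centered :: "'a \<Rightarrow> real" where
  "alpha_centered x = alpha x - 1"

definition drift :: "'a \<Rightarrow> real" where
  "drift y = (LBINT r:{0<..1}. alpha_centered (phi r y))"

definition drift_sum :: "nat \<Rightarrow> 'a \<Rightarrow> real" where
  "drift_sum N x = (\<Sum>j<N. drift (phi (real j) x))"

lemma alpha_centered_measurable: "alpha_centered \<in> borel_measurable M"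
  unfolding alpha_centered_def using alpha_measurable by measurable

lemma abs_alpha_centered_le: "x \<in> space M \<Longrightarrow> \<bar>alpha_centered x\<bar> \<le> K"
  unfolding alpha_centered_def using alpha_le[of x] alpha_ge[of x] K_gt_1
  by (smt (verit) divide_pos_pos)

lemma alpha_centered_flow_measurable:
  "(\<lambda>(x, r). alpha_centered (phi (u + r) x)) \<in> borel_measurable (M \<Otimes>\<^sub>M lborel)"
proof -
  have "(\<lambda>(x, r::real). (x, u + r)) \<in> measurable (M \<Otimes>\<^sub>M lborel) (M \<Otimes>\<^sub>M lborel)"
    by measurable
  from measurable_compose[OF measurable_compose[OF this flow_measurable] alpha_centered_measurable]
  show ?thesis by (simp add: case_prod_beta')
qed

lemma drift_eq_xi: "y \<in> space M \<Longrightarrow> drift y = \<xi> y 1 - 1"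
  unfolding drift_def alpha_centered_def
  using set_integral_diff(2)[OF alpha_orbit_set_integrable set_integrable_const_Ioc, of y 0 1 1]
    set_integral_const_Ioc[of 0 1 1] xi_eq_orbit_integral[of 1 y]
  by (simp add: orbit_integral_def)

lemma abs_drift_le: "y \<in> space M \<Longrightarrow> \<bar>drift y\<bar> \<le> K"
  using drift_eq_xi[of y] xi_bounds[of y 1] K_gt_1
  by (smt (verit) divide_pos_pos)

lemma drift_measurable: "drift \<in> borel_measurable M"
proof -
  have "(\<lambda>p. indicator {0<..1::real} (snd p) *\<^sub>R (\<lambda>(x, r). alpha_centered (phi (0 + r) x)) p)
      \<in> borel_measurable (M \<Otimes>\<^sub>M lborel)"
    using alpha_centered_flow_measurable[of 0] by measurable
  then have "(\<lambda>(x, r). indicator {0<..1::real} r *\<^sub>R alpha_centered (phi r x))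
      \<in> borel_measurable (M \<Otimes>\<^sub>M lborel)"
    by (simp add: case_prod_beta')
  then show ?thesis
    unfolding drift_def set_lebesgue_integral_def by (rule lborel.borel_measurable_lebesgue_integral)
qed

lemma drift_flow_measurable: "(\<lambda>x. drift (phi t x)) \<in> borel_measurable M"
  using measurable_compose[OF phi_measurable drift_measurable] .

lemma drift_sum_measurable: "drift_sum N \<in> borel_measurable M"
  unfolding drift_sum_def using drift_flow_measurable by measurable

lemma drift_flow: "x \<in> space M \<Longrightarrow> drift (phi u x) = (LBINT r:{0<..1}. alpha_centered (phi (u + r) x))"
  unfolding drift_def using flow_add by simp

lemma xi_nat_eq_drift_sum:
  assumes "x \<in> space M"
  shows "\<xi> x (real N) - real N = drift_sum N x"
proof (induction N)
  case 0 then show ?case using xi_zero[OF assms] by (simp add: drift_sum_def)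
next
  case (Suc N)
  have "\<xi> x (real (Suc N)) = \<xi> x (real N + 1)" by (simp add: add.commute)
  also have "\<dots> = \<xi> x (real N) + \<xi> (phi (real N) x) 1" by (rule xi_cocycle[OF assms]) auto
  finally show ?case
    using Suc drift_eq_xi[OF phi_in_space[OF assms], of "real N"] by (simp add: drift_sum_def)
qed

lemma alpha_centered_correlation_decay:
  assumes "0 \<le> s" "s + 1 \<le> v"
  shows "\<bar>\<integral>x. alpha_centered (phi s x) * alpha_centered (phi v x) \<partial>M\<bar> \<le> B * (v - s) powr (- \<eta>)"
proof -
  have "(\<integral>x. alpha_centered (phi s x) * alpha_centered (phi v x) \<partial>M)
      = (\<integral>x. alpha_centered (phi s x) * alpha_centered (phi (v - s) (phi s x)) \<partial>M)"
    using flow_add[of _ s "v - s"] by (intro Bochner_Integration.integral_cong) auto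
  also have "\<dots> = (\<integral>x. alpha_centered x * alpha_centered (phi (v - s) x) \<partial>M)"
    using alpha_centered_measurable measurable_compose[OF phi_measurable alpha_centered_measurable]
    by (intro integral_flow_invariant) measurable
  finally show ?thesis
    using correlation_decay[of "v - s"] assms by (simp add: alpha_centered_def mult.commute)
qed

lemma abs_product_le_square:
  fixes a b :: real
  shows "\<bar>a\<bar> \<le> K \<Longrightarrow> \<bar>b\<bar> \<le> K \<Longrightarrow> \<bar>a * b\<bar> \<le> K * K"
  by (simp add: abs_mult mult_mono')

lemma alpha_centered_drift_correlation_decay:
  assumes "2 \<le> v"
  shows "\<bar>\<integral>x. alpha_centered (phi v x) * drift x \<partial>M\<bar> \<le> B * (v - 1) powr (- \<eta>)"
proof -
  have "alpha_centered (phi v x) * drift x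
      = (LBINT s:{0<..1}. alpha_centered (phi (0 + s) x) * alpha_centered (phi v x))" for x
    unfolding drift_def mult.commute[of "alpha_centered (phi v x)"] set_integral_Ioc_mult_right
    by simp
  then have "(\<integral>x. alpha_centered (phi v x) * drift x \<partial>M)
      = (\<integral>x. (LBINT s:{0<..1}. alpha_centered (phi (0 + s) x) * alpha_centered (phi v x)) \<partial>M)"
    by (simp only:)
  also have "\<dots> = (LBINT s:{0<..1}. (\<integral>x. alpha_centered (phi (0 + s) x) * alpha_centered (phi v x) \<partial>M))"
  proof (rule integral_set_integral_unit_interval_swap[where c="K * K"])
    have "(\<lambda>p. (\<lambda>(x, r). alpha_centered (phi (0 + r) x)) p * alpha_centered (phi v (fst p)))
        \<in> borel_measurable (M \<Otimes>\<^sub>M lborel)"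
      using alpha_centered_flow_measurable[of 0]
        measurable_compose[OF phi_measurable alpha_centered_measurable] by measurable
    then show "(\<lambda>(x, s). alpha_centered (phi (0 + s) x) * alpha_centered (phi v x))
        \<in> borel_measurable (M \<Otimes>\<^sub>M lborel)"
      by (simp add: case_prod_beta')
  qed (intro abs_product_le_square abs_alpha_centered_le phi_in_space)
  finally have "(\<integral>x. alpha_centered (phi v x) * drift x \<partial>M) = \<dots>" .
  also have "\<bar>\<dots>\<bar> \<le> B * (v - 1) powr (- \<eta>)"
  proof (rule abs_set_integral_unit_interval_le)
    fix s :: real assume s: "s \<in> {0<..1}"
    have "\<bar>\<integral>x. alpha_centered (phi s x) * alpha_centered (phi v x) \<partial>M\<bar> \<le> B * (v - s) powr (- \<eta>)"
      using s assms by (intro alpha_centered_correlation_decay) auto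
    also have "\<dots> \<le> B * (v - 1) powr (- \<eta>)"
      using s assms eta_pos by (intro mult_left_mono[OF powr_mono2' B_nonneg]) auto
    finally show "\<bar>\<integral>x. alpha_centered (phi (0 + s) x) * alpha_centered (phi v x) \<partial>M\<bar>
        \<le> B * (v - 1) powr (- \<eta>)" by simp
  qed
  finally show ?thesis .
qed

lemma drift_correlation_decay:
  assumes "2 \<le> k"
  shows "\<bar>\<integral>x. drift (phi (real k) x) * drift x \<partial>M\<bar> \<le> B * (real k - 1) powr (- \<eta>)"
proof -
  have "(\<integral>x. drift (phi (real k) x) * drift x \<partial>M)
      = (\<integral>x. (LBINT r:{0<..1}. alpha_centered (phi (real k + r) x) * drift x) \<partial>M)"
    by (intro Bochner_Integration.integral_cong) (simp_all only: drift_flow set_integral_Ioc_mult_right)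
  also have "\<dots> = (LBINT r:{0<..1}. (\<integral>x. alpha_centered (phi (real k + r) x) * drift x \<partial>M))"
  proof (rule integral_set_integral_unit_interval_swap[where c="K * K"])
    have "(\<lambda>p. (\<lambda>(x, r). alpha_centered (phi (real k + r) x)) p * drift (fst p))
        \<in> borel_measurable (M \<Otimes>\<^sub>M lborel)"
      using alpha_centered_flow_measurable[of "real k"] drift_measurable by measurable
    then show "(\<lambda>(x, r). alpha_centered (phi (real k + r) x) * drift x)
        \<in> borel_measurable (M \<Otimes>\<^sub>M lborel)"
      by (simp add: case_prod_beta')
  qed (intro abs_product_le_square abs_alpha_centered_le abs_drift_le phi_in_space)
  finally have "(\<integral>x. drift (phi (real k) x) * drift x \<partial>M) = \<dots>" .
  also have "\<bar>\<dots>\<bar> \<le> B * (real k - 1) powr (- \<eta>)"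
  proof (rule abs_set_integral_unit_interval_le)
    fix r :: real assume r: "r \<in> {0<..1}"
    have "\<bar>\<integral>x. alpha_centered (phi (real k + r) x) * drift x \<partial>M\<bar> \<le> B * (real k + r - 1) powr (- \<eta>)"
      using r assms by (intro alpha_centered_drift_correlation_decay) auto
    also have "\<dots> \<le> B * (real k - 1) powr (- \<eta>)"
      using r assms eta_pos by (intro mult_left_mono[OF powr_mono2' B_nonneg]) auto
    finally show "\<bar>\<integral>x. alpha_centered (phi (real k + r) x) * drift x \<partial>M\<bar> \<le> B * (real k - 1) powr (- \<eta>)" .
  qed
  finally show ?thesis .
qed

definition drift_corr :: "nat \<Rightarrow> real" where
  "drift_corr d = (\<integral>x. drift (phi (real d) x) * drift x \<partial>M)"

lemma drift_pair_correlation_eq: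
  assumes "j \<le> i"
  shows "(\<integral>x. drift (phi (real i) x) * drift (phi (real j) x) \<partial>M) = drift_corr (i - j)"
proof -
  have "phi (real i) x = phi (real (i - j)) (phi (real j) x)" if "x \<in> space M" for x
    using flow_add[OF that, of "real j" "real (i - j)"] assms by simp
  then have "(\<integral>x. drift (phi (real i) x) * drift (phi (real j) x) \<partial>M)
      = (\<integral>x. drift (phi (real (i - j)) (phi (real j) x)) * drift (phi (real j) x) \<partial>M)"
    by (intro Bochner_Integration.integral_cong) auto
  also have "\<dots> = drift_corr (i - j)" unfolding drift_corr_def
    by (rule integral_flow_invariant) (use drift_flow_measurable drift_measurable in measurable)
  finally show ?thesis .
qed

lemma drift_pair_correlation_index_dist:
  "(\<integral>x. drift (phi (real i) x) * drift (phi (real j) x) \<partial>M) = drift_corr (index_dist i j)"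
proof (cases "j \<le> i")
  case True then show ?thesis using drift_pair_correlation_eq[OF True] by (simp add: index_dist_def)
next
  case False
  then have "(\<integral>x. drift (phi (real i) x) * drift (phi (real j) x) \<partial>M) = drift_corr (j - i)"
    using drift_pair_correlation_eq[of i j] by (simp add: mult.commute)
  then show ?thesis using False by (simp add: index_dist_def)
qed

lemma abs_drift_corr_le: "\<bar>drift_corr d\<bar> \<le> K * K"
  unfolding drift_corr_def
  by (intro abs_integral_le_const abs_product_le_square abs_drift_le phi_in_space)

lemma abs_drift_corr_le_far:
  assumes "1 \<le> L" "L < d"
  shows "\<bar>drift_corr d\<bar> \<le> B * real L powr (- \<eta>)"
proof -
  have "\<bar>drift_corr d\<bar> \<le> B * (real d - 1) powr (- \<eta>)"
    unfolding drift_corr_def by (rule drift_correlation_decay) (use assms in auto)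
  also have "\<dots> \<le> B * real L powr (- \<eta>)"
    by (rule mult_left_mono[OF powr_mono2' B_nonneg]) (use assms eta_pos in auto)
  finally show ?thesis .
qed

lemma drift_pair_integrable: "integrable M (\<lambda>x. drift (phi (real i) x) * drift (phi (real j) x))"
proof (rule integrable_const_bound[where B="K * K"])
  show "AE x in M. norm (drift (phi (real i) x) * drift (phi (real j) x)) \<le> K * K"
    by (intro AE_I2) (simp add: abs_product_le_square abs_drift_le phi_in_space del: abs_mult)
qed (use drift_flow_measurable in measurable)

lemma drift_sum_second_moment_le:
  assumes "1 \<le> L"
  shows "(\<integral>x. (drift_sum N x)\<^sup>2 \<partial>M)
    \<le> real N * ((2 * real L + 1) * (K * K) + real N * (B * real L powr (- \<eta>)))"
proof -
  define majorant where
    "majorant d = (if d \<le> L then K * K else 0) + B * real L powr (- \<eta>)" for d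
  have row: "(\<Sum>j<N. majorant (index_dist i j))
      \<le> (2 * real L + 1) * (K * K) + real N * (B * real L powr (- \<eta>))" for i
  proof -
    have "(\<Sum>j<N. (if index_dist i j \<le> L then K * K else 0))
        = real (card {j \<in> {..<N}. index_dist i j \<le> L}) * (K * K)"
      by (simp add: sum.inter_filter[symmetric])
    also have "\<dots> \<le> (2 * real L + 1) * (K * K)"
      using card_index_dist_le[of N i L] by (intro mult_right_mono) auto
    finally show ?thesis by (simp add: majorant_def sum.distrib)
  qed
  have "0 \<le> B * real L powr (- \<eta>)" using B_nonneg by simp
  then have "\<bar>drift_corr d\<bar> \<le> majorant d" for d
    using abs_drift_corr_le[of d] abs_drift_corr_le_far[OF assms, of d]
    by (cases "d \<le> L") (auto simp: majorant_def)
  then have "(\<Sum>i<N. \<Sum>j<N. drift_corr (index_dist i j)) \<le> (\<Sum>i<N. \<Sum>j<N. majorant (index_dist i j))"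
    by (intro sum_mono) (meson abs_le_D1)
  moreover have "(\<integral>x. (drift_sum N x)\<^sup>2 \<partial>M) = (\<Sum>i<N. \<Sum>j<N. drift_corr (index_dist i j))"
    unfolding drift_sum_def power2_eq_square sum_product
    by (simp add: Bochner_Integration.integral_sum drift_pair_integrable
        drift_pair_correlation_index_dist)
  moreover have "(\<Sum>i<N. \<Sum>j<N. majorant (index_dist i j))
      \<le> (\<Sum>i<N. (2 * real L + 1) * (K * K) + real N * (B * real L powr (- \<eta>)))"
    by (intro sum_mono row)
  ultimately show ?thesis by simp
qed

lemma drift_sum_square_integrable: "integrable M (\<lambda>x. (drift_sum N x)\<^sup>2)"
  unfolding drift_sum_def power2_eq_square sum_product
  by (intro Bochner_Integration.integrable_sum drift_pair_integrable)

end

lemma chebyshev_exponent_arith: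
  fixes n q d e a b :: real
  assumes n: "1 \<le> n" and q: "1 \<le> q" and d: "0 < d" "d \<le> 1" "d \<le> e" "4 \<le> q * d"
    and a: "0 \<le> a" and b: "0 \<le> b"
  shows "n powr (2*q) * ((2 * n powr q + 1) * a + n powr (2*q) * (b * (n powr q) powr (-e)))
      / (n powr (2*q*(1-d/8)))\<^sup>2 \<le> (3*a + b) / n\<^sup>2"
proof -
  let ?E = "n powr (4*q - q*d)"
  have "1 \<le> n powr q" using n q by (simp add: ge_one_powr_ge_zero)
  then have "n powr (2*q) * ((2 * n powr q + 1) * a) \<le> n powr (2*q) * ((3 * n powr q) * a)"
    using a by (intro mult_left_mono mult_right_mono) auto
  also have "\<dots> = 3*a * n powr (3*q)" by (simp add: powr_add[symmetric] algebra_simps)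
  also have "\<dots> \<le> 3*a * ?E"
    using n d q a by (intro mult_left_mono powr_mono) (auto simp: algebra_simps mult_left_le)
  finally have near: "n powr (2*q) * ((2 * n powr q + 1) * a) \<le> 3*a * ?E" .
  have "n powr (2*q) * (n powr (2*q) * (b * (n powr q) powr (-e))) = b * n powr (4*q - q*e)"
    using n by (simp add: powr_powr powr_add[symmetric] algebra_simps)
  also have "\<dots> \<le> b * ?E"
    using n d q b by (intro mult_left_mono powr_mono) (auto simp: algebra_simps mult_left_mono)
  finally have far: "n powr (2*q) * (n powr (2*q) * (b * (n powr q) powr (-e))) \<le> b * ?E" .
  have tau: "(n powr (2*q*(1-d/8)))\<^sup>2 = n powr (4*q - q*d/2)"
    using n by (simp add: powr_powr[symmetric] power2_eq_square powr_add[symmetric] algebra_simps)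
  have "n powr (2*q) * ((2 * n powr q + 1) * a + n powr (2*q) * (b * (n powr q) powr (-e)))
      / (n powr (2*q*(1-d/8)))\<^sup>2 \<le> (3*a + b) * ?E / n powr (4*q - q*d/2)"
    unfolding tau using near far n by (intro divide_right_mono) (auto simp: algebra_simps)
  also have "\<dots> = (3*a + b) * n powr ((4*q - q*d) - (4*q - q*d/2))"
    by (simp only: powr_diff times_divide_eq_right)
  also have "\<dots> \<le> (3*a + b) * n powr (-2)"
    using n d a b by (intro mult_left_mono powr_mono) (auto simp: mult.commute)
  also have "\<dots> = (3*a + b) / n\<^sup>2"
    using n by (simp add: powr_minus_divide powr_realpow divide_inverse)
  finally show ?thesis .
qed

lemma interpolation_exponent_arith:
  fixes n t p \<theta> e c G D \<tau> :: real
  assumes n: "1 \<le> n" and t: "n powr p \<le> t" and p: "1 \<le> p"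
    and e: "0 < e" "e \<le> \<theta> / 2" "p * e \<le> 1 / 2" and c: "0 < c" and G: "0 \<le> G"
    and small_1: "n powr (- (p * \<theta> / 2)) \<le> c / 2"
    and small_2: "G * n powr (- (1 / 2)) \<le> c / 2"
    and \<tau>: "\<tau> \<le> n powr (p * (1 - \<theta>))" and D: "D \<le> G * n powr (p - 1)"
  shows "\<tau> + D \<le> c * t powr (1 - e)"
proof -
  have "e < 1" using mult_right_mono[of 1 p e] e p by linarith
  let ?P = "n powr (p * (1 - e))"
  have "?P = (n powr p) powr (1 - e)" by (simp add: powr_powr)
  also have "\<dots> \<le> t powr (1 - e)" by (rule powr_mono2) (use \<open>e < 1\<close> t n in auto)
  finally have P: "?P \<le> t powr (1 - e)" .
  have "n powr (p * (1 - \<theta>)) = n powr (- (p * \<theta> / 2)) * n powr (p - p * \<theta> / 2)"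
    by (simp add: powr_add[symmetric] algebra_simps)
  also have "\<dots> \<le> (c / 2) * ?P"
  proof (rule mult_mono[OF small_1])
    show "n powr (p - p * \<theta> / 2) \<le> ?P"
      by (rule powr_mono) (use n e p in \<open>auto simp: algebra_simps\<close>)
  qed (use c in auto)
  finally have A: "\<tau> \<le> (c / 2) * ?P" using \<tau> by linarith
  have "G * n powr (p - 1) = (G * n powr (- (1 / 2))) * n powr (p - 1 / 2)"
    by (simp add: powr_add[symmetric] algebra_simps)
  also have "\<dots> \<le> (c / 2) * ?P"
  proof (rule mult_mono[OF small_2])
    show "n powr (p - 1 / 2) \<le> ?P"
      by (rule powr_mono) (use n e p in \<open>auto simp: algebra_simps\<close>)
  qed (use c in auto)
  finally have "D \<le> (c / 2) * ?P" using D by linarith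
  with A have "\<tau> + D \<le> c * ?P" by linarith
  also have "\<dots> \<le> c * t powr (1 - e)" using P c by simp
  finally show ?thesis .
qed

section \<open>Sublinear deviation of the time change\<close>

context decaying_time_change
begin

lemma prob_drift_sum_deviation_le:
  assumes q: "1 \<le> q" "4 \<le> real q * d" and d: "0 < d" "d \<le> 1" "d \<le> \<eta>" and n: "1 \<le> n"
  shows "prob {x \<in> space M. real n powr (real (2*q) * (1 - d/8)) \<le> \<bar>drift_sum (n^(2*q)) x\<bar>}
    \<le> (3 * (K * K) + B) / real n ^ 2"
proof -
  let ?\<tau> = "real n powr (real (2*q) * (1 - d/8))"
  have "0 < ?\<tau>" using n by simp
  have n_pos: "0 < real n" using n by simp
  have "prob {x \<in> space M. ?\<tau> \<le> \<bar>drift_sum (n^(2*q)) x\<bar>}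
      \<le> (\<integral>x. (drift_sum (n^(2*q)) x)\<^sup>2 \<partial>M) / ?\<tau>\<^sup>2"
    by (rule prob_abs_ge_le_second_moment[OF drift_sum_square_integrable \<open>0 < ?\<tau>\<close>])
  also have "\<dots> \<le> real (n^(2*q)) * ((2 * real (n^q) + 1) * (K * K)
      + real (n^(2*q)) * (B * real (n^q) powr (- \<eta>))) / ?\<tau>\<^sup>2"
    using n by (intro divide_right_mono drift_sum_second_moment_le) simp_all
  also have "\<dots> = real n powr (2 * real q) * ((2 * real n powr real q + 1) * (K * K)
      + real n powr (2 * real q) * (B * (real n powr real q) powr (- \<eta>)))
      / (real n powr (2 * real q * (1 - d/8)))\<^sup>2"
    using powr_realpow[OF n_pos, of "2*q"] powr_realpow[OF n_pos, of q] by simp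
  also have "\<dots> \<le> (3 * (K * K) + B) / real n ^ 2"
    by (rule chebyshev_exponent_arith) (use n q d B_nonneg in auto)
  finally show ?thesis .
qed

lemma xi_deviation_interpolate:
  fixes p :: nat and \<theta> e c t :: real
  assumes x: "x \<in> space M" and n: "1 \<le> n" and p: "1 \<le> p"
    and at_node: "\<bar>drift_sum (n^p) x\<bar> \<le> real n powr (real p * (1 - \<theta>))"
    and t: "real (n ^ p) \<le> t" "t \<le> real ((n + 1) ^ p)"
    and e: "0 < e" "e \<le> \<theta> / 2" "real p * e \<le> 1 / 2" and c: "0 < c"
    and small_1: "real n powr (- (real p * \<theta> / 2)) \<le> c / 2"
    and small_2: "(K * (real p * 2 ^ (p - 1))) * real n powr (- (1 / 2)) \<le> c / 2"
  shows "\<bar>\<xi> x t - t\<bar> \<le> c * t powr (1 - e)"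
proof -
  let ?N = "real (n ^ p)"
  have "\<xi> x ?N - ?N = drift_sum (n^p) x" using xi_nat_eq_drift_sum[OF x, of "n^p"] by simp
  moreover have "\<bar>(\<xi> x t - \<xi> x ?N) - (t - ?N)\<bar> \<le> K * (t - ?N)"
  proof -
    have "0 \<le> t - ?N" "0 \<le> (t - ?N) / K" "t - ?N \<le> K * (t - ?N)"
      using K_gt_1 t(1) mult_right_mono[of 1 K "t - ?N"] by auto
    then show ?thesis using xi_diff_bounds[OF x _ t(1)] unfolding abs_le_iff by simp
  qed
  ultimately have deviation: "\<bar>\<xi> x t - t\<bar> \<le> \<bar>drift_sum (n^p) x\<bar> + K * (t - ?N)"
    by (smt (verit))
  have "t - ?N \<le> real p * 2 ^ (p - 1) * real n ^ (p - 1)"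
    using t(2) real_Suc_power_diff_le[OF n, of p] by simp
  also have "real n ^ (p - 1) = real n powr (real p - 1)"
    using n p by (simp add: powr_realpow[symmetric] of_nat_diff)
  finally have "K * (t - ?N) \<le> (K * (real p * 2 ^ (p - 1))) * real n powr (real p - 1)"
    using K_gt_1 by (simp add: mult.assoc mult_left_mono)
  moreover have "real n powr real p \<le> t" using t(1) n by (simp add: powr_realpow)
  ultimately have "\<bar>drift_sum (n^p) x\<bar> + K * (t - ?N) \<le> c * t powr (1 - e)"
    using n p K_gt_1 by (intro interpolation_exponent_arith[OF _ _ _ e c _ small_1 small_2 at_node])
      auto
  with deviation show ?thesis by linarith
qed

text \<open>The exponents: with d = min 1 \<eta> and q \<ge> 4/d, the sparse times n^(2q) with correlation
  cut-off n^q have exceptional probabilities O(n^(-2)); the final exponent e must be small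
  compared both with the saving \<theta> = d/8 and with 1/p, the relative gap between n^p and (n+1)^p.\<close>

theorem xi_deviation_sublinear:
  "\<exists>e. 0 < e \<and> e < 1/4 \<and> (\<forall>\<omega> > 0. \<exists>Y \<in> events. 1 - \<omega> \<le> prob Y \<and>
     (\<exists>m \<ge> 1. \<forall>x \<in> Y. \<forall>t \<ge> m. \<bar>\<xi> x t - t\<bar> \<le> K powr (-5) * t powr (1 - e)))"
proof -
  define d where "d = min 1 \<eta>"
  have d: "0 < d" "d \<le> 1" "d \<le> \<eta>" using eta_pos by (auto simp: d_def)
  define q :: nat where "q = nat \<lceil>4 / d\<rceil>"
  have "4 / d \<le> real q" unfolding q_def by linarith
  then have qd: "4 \<le> real q * d" using d by (simp add: field_simps)
  moreover have "real q * d \<le> real q" using d by (simp add: mult_left_le)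
  ultimately have "4 \<le> real q" by linarith
  with qd have q: "4 \<le> real q * d" "1 \<le> q" by simp_all
  define p :: nat where "p = 2 * q"
  have p: "1 \<le> p" using q by (simp add: p_def)
  define \<theta> where "\<theta> = d / 8"
  define e where "e = min (\<theta> / 2) (1 / (2 * real p))"
  have e: "0 < e" "e \<le> \<theta> / 2" "e < 1/4" using d p by (auto simp: e_def \<theta>_def)
  have "real p * e \<le> real p * (1 / (2 * real p))" by (intro mult_left_mono) (auto simp: e_def)
  then have pe: "real p * e \<le> 1 / 2" using p by simp
  define c where "c = K powr (-5)"
  have c: "0 < c" using K_gt_1 by (simp add: c_def)
  define G where "G = K * (real p * 2 ^ (p - 1))"
  have G: "0 < G" using K_gt_1 p by (simp add: G_def)
  have "eventually (\<lambda>n. real n powr (- (real p * \<theta> / 2)) \<le> c / 2 \<and> real n powr (- (1 / 2)) \<le> c / (2 * G)) sequentially"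
    using d p c G by (intro eventually_conj eventually_powr_neg_le) (auto simp: \<theta>_def)
  then obtain n1 where small: "\<And>n. n1 \<le> n \<Longrightarrow>
      real n powr (- (real p * \<theta> / 2)) \<le> c / 2 \<and> G * real n powr (- (1 / 2)) \<le> c / 2"
    using G by (auto simp: eventually_sequentially field_simps)
  define Bad where "Bad n = {x \<in> space M. real n powr (real p * (1 - \<theta>)) \<le> \<bar>drift_sum (n^p) x\<bar>}" for n
  have Bad_events: "Bad n \<in> events" for n
    unfolding Bad_def using drift_sum_measurable[of "n^p"] by measurable
  have Bad_prob: "prob (Bad n) \<le> (3 * (K * K) + B) / real n ^ 2" if "1 \<le> n" for n
    using prob_drift_sum_deviation_le[OF q(2,1) d that] by (simp add: Bad_def p_def \<theta>_def)
  have "\<exists>Y \<in> events. 1 - \<omega> \<le> prob Y \<and>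
      (\<exists>m \<ge> 1. \<forall>x \<in> Y. \<forall>t \<ge> m. \<bar>\<xi> x t - t\<bar> \<le> c * t powr (1 - e))" if "0 < \<omega>" for \<omega>
  proof -
    obtain Y n0 where Y: "Y \<in> events" "1 - \<omega> \<le> prob Y" and "1 \<le> n0"
      and good: "\<And>x n. x \<in> Y \<Longrightarrow> n0 \<le> n \<Longrightarrow> x \<in> space M \<and> x \<notin> Bad n"
      using large_event_avoiding_tail[OF Bad_events Bad_prob _ \<open>0 < \<omega>\<close>] B_nonneg by auto
    define N0 where "N0 = max n0 n1"
    have "\<bar>\<xi> x t - t\<bar> \<le> c * t powr (1 - e)" if "x \<in> Y" "real N0 ^ p \<le> t" for x t
    proof -
      obtain n where n: "N0 \<le> n" "real (n ^ p) \<le> t" "t \<le> real ((n + 1) ^ p)"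
        using real_power_bracket[OF _ \<open>real N0 ^ p \<le> t\<close>] p by auto
      then have "1 \<le> n" "n1 \<le> n" "n0 \<le> n" using \<open>1 \<le> n0\<close> by (auto simp: N0_def)
      with good[OF \<open>x \<in> Y\<close>] have "x \<in> space M" "x \<notin> Bad n" by auto
      then have "\<bar>drift_sum (n^p) x\<bar> \<le> real n powr (real p * (1 - \<theta>))"
        by (auto simp: Bad_def)
      from xi_deviation_interpolate[OF \<open>x \<in> space M\<close> \<open>1 \<le> n\<close> p this n(2,3) e(1,2) pe c]
      show ?thesis using small[OF \<open>n1 \<le> n\<close>] by (simp add: G_def)
    qed
    moreover have "1 \<le> real N0 ^ p" using \<open>1 \<le> n0\<close> by (simp add: N0_def)
    ultimately show ?thesis using Y by blast
  qed
  with e show ?thesis unfolding c_def by blast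
qed

theorem xi_w_inv_sublinear:
  "\<exists>e. 0 < e \<and> e < 1/4 \<and> (\<forall>\<omega> > 0. \<exists>Y \<in> events. 1 - \<omega> \<le> prob Y \<and>
     (\<exists>m \<ge> 1. \<forall>x \<in> Y. \<forall>t \<ge> m.
        \<bar>\<xi> x t - t\<bar> \<le> K powr (-4) * t powr (1 - e) \<and>
        \<bar>w_inv phi alpha x t - t\<bar> \<le> K powr (-4) * t powr (1 - e)))"
proof -
  obtain e where e: "0 < e" "e < 1/4" and xi_dev: "\<And>\<omega>. 0 < \<omega> \<Longrightarrow> \<exists>Y \<in> events. 1 - \<omega> \<le> prob Y \<and>
      (\<exists>m \<ge> 1. \<forall>x \<in> Y. \<forall>t \<ge> m. \<bar>\<xi> x t - t\<bar> \<le> K powr (-5) * t powr (1 - e))"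
    using xi_deviation_sublinear by blast
  have K_powr: "K powr (-5) * K = K powr (-4)" "K powr (-5) \<le> K powr (-4)"
    using K_gt_1 powr_add[of K "-5" 1] by auto
  have "\<exists>Y \<in> events. 1 - \<omega> \<le> prob Y \<and> (\<exists>m \<ge> 1. \<forall>x \<in> Y. \<forall>t \<ge> m.
      \<bar>\<xi> x t - t\<bar> \<le> K powr (-4) * t powr (1 - e) \<and>
      \<bar>w_inv phi alpha x t - t\<bar> \<le> K powr (-4) * t powr (1 - e))" if \<omega>: "0 < \<omega>" for \<omega>
  proof -
    obtain Y m where Y: "Y \<in> events" "1 - \<omega> \<le> prob Y" and "1 \<le> m"
      and dev: "\<And>x t. x \<in> Y \<Longrightarrow> m \<le> t \<Longrightarrow> \<bar>\<xi> x t - t\<bar> \<le> K powr (-5) * t powr (1 - e)"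
      using xi_dev[OF \<omega>] by blast
    have "\<bar>\<xi> x t - t\<bar> \<le> K powr (-4) * t powr (1 - e) \<and>
        \<bar>w_inv phi alpha x t - t\<bar> \<le> K powr (-4) * t powr (1 - e)" if "x \<in> Y" "K * m \<le> t" for x t
    proof
      have "m \<le> t" using that \<open>1 \<le> m\<close> K_gt_1 by (smt (verit) mult_le_cancel_right1)
      then show "\<bar>\<xi> x t - t\<bar> \<le> K powr (-4) * t powr (1 - e)"
        using dev[OF \<open>x \<in> Y\<close>] K_powr(2) by (smt (verit) mult_right_mono powr_ge_zero)
      have "x \<in> space M" using Y(1) \<open>x \<in> Y\<close> by (auto dest: sets.sets_into_space)
      from w_inv_deviation_le[OF this dev[OF \<open>x \<in> Y\<close>]] that \<open>1 \<le> m\<close> e K_gt_1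
      show "\<bar>w_inv phi alpha x t - t\<bar> \<le> K powr (-4) * t powr (1 - e)"
        by (simp add: K_powr(1))
    qed
    moreover have "1 \<le> K * m" using K_gt_1 \<open>1 \<le> m\<close> by (smt (verit) mult_le_cancel_right1)
    ultimately show ?thesis using Y by blast
  qed
  with e show ?thesis by blast
qed

end

section \<open>Good time changes under the strong spectral gap\<close>

lemma C_alpha_bounds:
  assumes "x \<in> space M" and "\<And>x. x \<in> space M \<Longrightarrow> alpha x > 0"
    and "bdd_above ((\<lambda>x. max (alpha x) (1 / alpha x)) ` space M)"
  shows "alpha x \<le> C_alpha M alpha" "1 / C_alpha M alpha \<le> alpha x"
proof -
  have bound: "max (alpha x) (1 / alpha x) \<le> C_alpha M alpha"
    unfolding C_alpha_def by (rule cSUP_upper[OF assms(1,3)])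
  then show "alpha x \<le> C_alpha M alpha" by simp
  have "0 < alpha x" using assms by simp
  then show "1 / C_alpha M alpha \<le> alpha x"
    using bound by (smt (verit) divide_le_eq le_divide_eq_1_pos max.bounded_iff mult.commute)
qed

lemma sobolev_norm_minus_one_finite:
  fixes S :: "('a \<Rightarrow> real) \<Rightarrow> ennreal"
  assumes triangle: "\<And>f g. S (\<lambda>x. f x + g x) \<le> S f + S g"
    and scale: "\<And>c f. S (\<lambda>x. c * f x) = ennreal \<bar>c\<bar> * S f"
    and "S (\<lambda>x. 1) < \<infinity>" and "S f < \<infinity>"
  shows "S (\<lambda>x. f x - 1) < \<infinity>"
proof -
  have "S (\<lambda>x. f x - 1) = S (\<lambda>x. f x + (- 1) * 1)" by simp
  also have "\<dots> \<le> S f + S (\<lambda>x. (- 1) * 1)" by (rule triangle)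
  also have "\<dots> = S f + S (\<lambda>x. 1)" using scale[of "- 1" "\<lambda>x. 1"] by simp
  also have "\<dots> < \<infinity>" using assms(3,4) by (simp add: ennreal_add_less_top)
  finally show ?thesis .
qed

theorem corollary2p7:
  fixes M :: "'a measure"
    and phi :: "real \<Rightarrow> 'a \<Rightarrow> 'a"
    and S :: "('a \<Rightarrow> real) \<Rightarrow> ennreal"
    and C eta_t :: real
    and alpha :: "'a \<Rightarrow> real"
  assumes prob: "prob_space M"
    (* the unipotent flow: a jointly measurable, measure preserving flow *)
    and flow_meas: "(\<lambda>(x, t). phi t x) \<in> measurable (M \<Otimes>\<^sub>M lborel) M"
    and flow_pres: "\<And>t. phi t \<in> M \<rightarrow>\<^sub>M M \<and> distr M M (phi t) = M"
    and flow_zero: "\<And>x. x \<in> space M \<Longrightarrow> phi 0 x = x"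
    and flow_add: "\<And>s t x. x \<in> space M \<Longrightarrow> phi (s + t) x = phi t (phi s x)"
    (* the Sobolev norm S *)
    and S_sup: "\<And>f x. x \<in> space M \<Longrightarrow> ennreal \<bar>f x\<bar> \<le> S f"
    and S_triangle: "\<And>f g. S (\<lambda>x. f x + g x) \<le> S f + S g"
    and S_scale: "\<And>c f. S (\<lambda>x. c * f x) = ennreal \<bar>c\<bar> * S f"
    and S_const: "S (\<lambda>x. 1) < \<infinity>"
    (* strong spectral gap: polynomial decay of correlations *)
    and C_pos: "C > 0" and eta_t_pos: "eta_t > 0"
    and mixing: "\<And>f g t. f \<in> borel_measurable M \<Longrightarrow> g \<in> borel_measurable M \<Longrightarrow>
        S f < \<infinity> \<Longrightarrow> S g < \<infinity> \<Longrightarrow>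
        (\<integral>x. f x \<partial>M) = 0 \<Longrightarrow> (\<integral>x. g x \<partial>M) = 0 \<Longrightarrow> t \<ge> 1 \<Longrightarrow>
        \<bar>\<integral>x. f (phi t x) * g x \<partial>M\<bar> \<le> C * enn2real (S f) * enn2real (S g) * t powr (- eta_t)"
    (* alpha is a good time-change function *)
    and alpha_meas: "alpha \<in> borel_measurable M"
    and alpha_pos: "\<And>x. x \<in> space M \<Longrightarrow> alpha x > 0"
    and alpha_bdd: "bdd_above ((\<lambda>x. max (alpha x) (1 / alpha x)) ` space M)"
    and alpha_C: "C_alpha M alpha > 1"
    and alpha_int: "(\<integral>x. alpha x \<partial>M) = 1"
    and alpha_S: "S alpha < \<infinity>"
  shows "\<exists>eta::real. 0 < eta \<and> eta < 1/4 \<and>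
    (\<forall>omega::real > 0. \<exists>Y \<in> sets M. measure M Y \<ge> 1 - omega \<and>
      (\<exists>m::real \<ge> 1. \<forall>x \<in> Y. \<forall>t \<ge> m.
         \<bar>xi phi alpha x t - t\<bar> \<le> C_alpha M alpha powr (-4) * t powr (1 - eta) \<and>
         \<bar>w_inv phi alpha x t - t\<bar> \<le> C_alpha M alpha powr (-4) * t powr (1 - eta)))"
proof -
  let ?K = "C_alpha M alpha"
  interpret time_changed_flow M phi alpha ?K
    by (intro time_changed_flow.intro time_changed_flow_axioms.intro prob flow_meas flow_pres
        flow_add alpha_meas alpha_C C_alpha_bounds[OF _ alpha_pos alpha_bdd])
  have "integrable M alpha"
  proof (rule integrable_const_bound[where B="?K"])
    show "AE x in M. norm (alpha x) \<le> ?K"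
      using alpha_pos alpha_le by (intro AE_I2) (simp add: less_imp_le)
  qed (rule alpha_measurable)
  then have mean_zero: "(\<integral>x. alpha x - 1 \<partial>M) = 0" using alpha_int by (simp add: prob_space)
  have finite: "S (\<lambda>x. alpha x - 1) < \<infinity>"
    using sobolev_norm_minus_one_finite[of S alpha] S_triangle S_scale S_const alpha_S by blast
  define B where "B = C * enn2real (S (\<lambda>x. alpha x - 1)) * enn2real (S (\<lambda>x. alpha x - 1))"
  have centered_measurable: "(\<lambda>x. alpha x - 1) \<in> borel_measurable M"
    using alpha_meas by measurable
  have correlation: "\<bar>\<integral>x. (alpha (phi u x) - 1) * (alpha x - 1) \<partial>M\<bar> \<le> B * u powr - eta_t"
    if "1 \<le> u" for u
    using mixing[OF centered_measurable centered_measurable finite finite mean_zero mean_zero that]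
    unfolding B_def .
  interpret decaying_time_change M phi alpha ?K B eta_t
    using C_pos by (intro decaying_time_change.intro decaying_time_change_axioms.intro
        time_changed_flow_axioms correlation eta_t_pos) (simp add: B_def)
  show ?thesis by (rule xi_w_inv_sublinear)
qed

end
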